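(* Let $\sigma$ be an implicit signature, $\mathsf V$ a pseudovariety of finite semigroups, $X$ a finite alphabet, and $\mathcal C$ the closure under union, product and iteration ($Y\mapsto Y^+$) of some set of finite subsets of $\Omega^\sigma_X\mathsf S$. Suppose the Pin-Reutenauer procedure holds for $\mathcal C$ over $\mathsf V$, i.e. for all $K,L\in\mathcal C$, with closures taken in $\Omega^\sigma_X\mathsf V$, $$\overline{p_{\mathsf V}(K)p_{\mathsf V}(L)}=\overline{p_{\mathsf V}(K)}\;\overline{p_{\mathsf V}(L)}\quad\text{and}\quad\overline{p_{\mathsf V}(L)^+}=\langle\overline{p_{\mathsf V}(L)}\rangle_\sigma.$$ Then $\mathsf V$ is full with respect to $\mathcal C$: for every $L\in\mathcal C$, $p_{\mathsf V}(\overline{L}^{\,\mathsf S})=\overline{p_{\mathsf V}(L)}$, where $\overline{L}^{\,\mathsf S}$ is the closure of $L$ in $\Omega^\sigma_X\mathsf S$ and the right side is the closure in $\Omega^\sigma_X\mathsf V$.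
   Context: $\overline{\Omega}_X\mathsf V$ is the free pro-$\mathsf V$ semigroup on $X$ and $\mathsf S$ the pseudovariety of all finite semigroups. An implicit signature is a set of implicit operations of finite arity containing binary multiplication; $\Omega^\sigma_X\mathsf V$ is the subalgebra of $\overline{\Omega}_X\mathsf V$ generated by $X$ under the operations of $\sigma$, with the induced topology. $p_{\mathsf V}:\overline{\Omega}_X\mathsf S\to\overline{\Omega}_X\mathsf V$ is the natural continuous homomorphism (it maps $\Omega^\sigma_X\mathsf S$ onto $\Omega^\sigma_X\mathsf V$). $\langle U\rangle_\sigma$ is the $\sigma$-subalgebra generated by $U$. *)

theory Defs
  imports Main
begin

text \<open>Finite semigroups are represented with carriers inside nat (every finite
semigroup is isomorphic to one of these); a pseudovariety is a class of such
representations closed under subsemigroups, homomorphic images (hence isomorphic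
copies) and finite direct products.\<close>

type_synonym sgr = "nat set \<times> (nat \<Rightarrow> nat \<Rightarrow> nat)"

definition carr :: "sgr \<Rightarrow> nat set" where "carr S = fst S"
definition smult :: "sgr \<Rightarrow> nat \<Rightarrow> nat \<Rightarrow> nat" where "smult S = snd S"

definition fin_sgr :: "sgr \<Rightarrow> bool" where
  "fin_sgr S \<longleftrightarrow> finite (carr S) \<and> carr S \<noteq> {} \<and>
     (\<forall>a\<in>carr S. \<forall>b\<in>carr S. smult S a b \<in> carr S) \<and>
     (\<forall>a\<in>carr S. \<forall>b\<in>carr S. \<forall>c\<in>carr S.
        smult S (smult S a b) c = smult S a (smult S b c))"

definition sg_hom :: "sgr \<Rightarrow> sgr \<Rightarrow> (nat \<Rightarrow> nat) \<Rightarrow> bool" where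
  "sg_hom S T h \<longleftrightarrow> h ` carr S \<subseteq> carr T \<and>
     (\<forall>a\<in>carr S. \<forall>b\<in>carr S. h (smult S a b) = smult T (h a) (h b))"

definition pseudovariety :: "sgr set \<Rightarrow> bool" where
  "pseudovariety V \<longleftrightarrow>
     (\<forall>S\<in>V. fin_sgr S) \<and>
     ({0}, \<lambda>_ _. 0) \<in> V \<and>
     (\<forall>S\<in>V. \<forall>B. B \<noteq> {} \<and> B \<subseteq> carr S \<and> (\<forall>a\<in>B. \<forall>b\<in>B. smult S a b \<in> B)
          \<longrightarrow> (B, smult S) \<in> V) \<and>
     (\<forall>S\<in>V. \<forall>T h. fin_sgr T \<and> sg_hom S T h \<and> h ` carr S = carr T \<longrightarrow> T \<in> V) \<and>
     (\<forall>S\<in>V. \<forall>T\<in>V. \<forall>P f g. fin_sgr P \<and> sg_hom P S f \<and> sg_hom P T g \<and>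
          bij_betw (\<lambda>p. (f p, g p)) (carr P) (carr S \<times> carr T) \<longrightarrow> P \<in> V)"

definition FinSg :: "sgr set" where "FinSg = {S. fin_sgr S}"

text \<open>Elements of the free pro-V semigroup on the alphabet 'x are the 'x-ary
implicit operations on V: natural families (S,\<phi>) \<mapsto> w_S(\<phi>), canonically undefined
outside valid arguments.\<close>
type_synonym 'x pelt = "sgr \<Rightarrow> ('x \<Rightarrow> nat) \<Rightarrow> nat"

definition valid :: "sgr set \<Rightarrow> sgr \<Rightarrow> ('x \<Rightarrow> nat) \<Rightarrow> bool" where
  "valid V S \<phi> \<longleftrightarrow> S \<in> V \<and> range \<phi> \<subseteq> carr S"

definition free_pro :: "sgr set \<Rightarrow> 'x pelt set" where
  "free_pro V = {w. (\<forall>S \<phi>. valid V S \<phi> \<longrightarrow> w S \<phi> \<in> carr S) \<and>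
                    (\<forall>S \<phi>. \<not> valid V S \<phi> \<longrightarrow> w S \<phi> = undefined) \<and>
                    (\<forall>S T h \<phi>. valid V S \<phi> \<and> T \<in> V \<and> sg_hom S T h \<longrightarrow>
                         h (w S \<phi>) = w T (h \<circ> \<phi>))}"

definition proj :: "sgr set \<Rightarrow> 'x pelt \<Rightarrow> 'x pelt" where
  "proj V w = (\<lambda>S \<phi>. if valid V S \<phi> then w S \<phi> else undefined)"

definition gen :: "sgr set \<Rightarrow> 'x \<Rightarrow> 'x pelt" where
  "gen V x = (\<lambda>S \<phi>. if valid V S \<phi> then \<phi> x else undefined)"

definition pmult :: "sgr set \<Rightarrow> 'x pelt \<Rightarrow> 'x pelt \<Rightarrow> 'x pelt" where
  "pmult V u v = (\<lambda>S \<phi>. if valid V S \<phi> then smult S (u S \<phi>) (v S \<phi>) else undefined)"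

definition implicit_op :: "nat \<Rightarrow> (sgr \<Rightarrow> nat list \<Rightarrow> nat) \<Rightarrow> bool" where
  "implicit_op n f \<longleftrightarrow>
     (\<forall>S xs. fin_sgr S \<and> length xs = n \<and> set xs \<subseteq> carr S \<longrightarrow> f S xs \<in> carr S) \<and>
     (\<forall>S xs. \<not> (fin_sgr S \<and> length xs = n \<and> set xs \<subseteq> carr S) \<longrightarrow> f S xs = undefined) \<and>
     (\<forall>S T h xs. fin_sgr S \<and> fin_sgr T \<and> sg_hom S T h \<and> length xs = n \<and> set xs \<subseteq> carr S
        \<longrightarrow> h (f S xs) = f T (map h xs))"

definition mult_op :: "nat \<times> (sgr \<Rightarrow> nat list \<Rightarrow> nat)" where
  "mult_op = (2, \<lambda>S xs. if fin_sgr S \<and> length xs = 2 \<and> set xs \<subseteq> carr S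
                         then smult S (xs ! 0) (xs ! 1) else undefined)"

definition implicit_signature :: "(nat \<times> (sgr \<Rightarrow> nat list \<Rightarrow> nat)) set \<Rightarrow> bool" where
  "implicit_signature \<sigma> \<longleftrightarrow> \<sigma> \<subseteq> {(n, f). implicit_op n f} \<and> mult_op \<in> \<sigma>"

definition apply_op :: "sgr set \<Rightarrow> nat \<times> (sgr \<Rightarrow> nat list \<Rightarrow> nat) \<Rightarrow> 'x pelt list \<Rightarrow> 'x pelt" where
  "apply_op V op ws = (\<lambda>S \<phi>. if valid V S \<phi> then snd op S (map (\<lambda>w. w S \<phi>) ws) else undefined)"

inductive_set subalg :: "sgr set \<Rightarrow> (nat \<times> (sgr \<Rightarrow> nat list \<Rightarrow> nat)) set \<Rightarrow> 'x pelt set \<Rightarrow> 'x pelt set"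
  for V \<sigma> U where
  base: "u \<in> U \<Longrightarrow> u \<in> subalg V \<sigma> U"
| app: "op \<in> \<sigma> \<Longrightarrow> length ws = fst op \<Longrightarrow> \<forall>w\<in>set ws. w \<in> subalg V \<sigma> U \<Longrightarrow> apply_op V op ws \<in> subalg V \<sigma> U"

definition Omega_sigma :: "sgr set \<Rightarrow> (nat \<times> (sgr \<Rightarrow> nat list \<Rightarrow> nat)) set \<Rightarrow> 'x pelt set" where
  "Omega_sigma V \<sigma> = subalg V \<sigma> (range (gen V))"

text \<open>Closure in the free pro-V semigroup (product topology of pointwise
convergence on the finite discrete semigroups of V), and induced closure in
Omega^sigma_X V.\<close>
definition pcl :: "sgr set \<Rightarrow> 'x pelt set \<Rightarrow> 'x pelt set" where
  "pcl V A = {u \<in> free_pro V. \<forall>F. finite F \<and> (\<forall>(S, \<phi>)\<in>F. valid V S \<phi>) \<longrightarrow>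
                 (\<exists>a\<in>A. \<forall>(S, \<phi>)\<in>F. a S \<phi> = u S \<phi>)}"

definition cl_sigma :: "sgr set \<Rightarrow> (nat \<times> (sgr \<Rightarrow> nat list \<Rightarrow> nat)) set \<Rightarrow> 'x pelt set \<Rightarrow> 'x pelt set" where
  "cl_sigma V \<sigma> A = pcl V A \<inter> Omega_sigma V \<sigma>"

definition setmult :: "sgr set \<Rightarrow> 'x pelt set \<Rightarrow> 'x pelt set \<Rightarrow> 'x pelt set" where
  "setmult V A B = {pmult V a b | a b. a \<in> A \<and> b \<in> B}"

inductive_set splus :: "sgr set \<Rightarrow> 'x pelt set \<Rightarrow> 'x pelt set" for V A where
  one: "a \<in> A \<Longrightarrow> a \<in> splus V A"
| step: "u \<in> splus V A \<Longrightarrow> a \<in> A \<Longrightarrow> pmult V u a \<in> splus V A"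

inductive_set rat_closure :: "'x pelt set set \<Rightarrow> 'x pelt set set" for B where
  base: "K \<in> B \<Longrightarrow> K \<in> rat_closure B"
| union: "K \<in> rat_closure B \<Longrightarrow> L \<in> rat_closure B \<Longrightarrow> K \<union> L \<in> rat_closure B"
| prod: "K \<in> rat_closure B \<Longrightarrow> L \<in> rat_closure B \<Longrightarrow> setmult FinSg K L \<in> rat_closure B"
| plus: "K \<in> rat_closure B \<Longrightarrow> splus FinSg K \<in> rat_closure B"

end

theory Submission
  imports Defs "HOL-Library.Nat_Bijection"
begin

text \<open>Projection is continuous, so \<open>p\<^sub>V\<close> maps the S-closure of \<open>L\<close> into the V-closure of
\<open>p\<^sub>V(L)\<close>; the converse inclusion is proved by induction on the rational expression for \<open>L\<close>.
Finite sets are closed and closure commutes with finite unions. On the V side the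
Pin-Reutenauer hypothesis rewrites closures of products and of iterations as products of
closures and as \<open>\<sigma>\<close>-subalgebras generated by closures; on the S side, closure commutes with
products, and the closure of \<open>L\<^sup>+\<close> is closed under every implicit operation: finitely many
evaluation points factor through a single finite semigroup \<open>P\<close> (their direct product), the
values of \<open>L\<^sup>+\<close> in \<open>P\<close> form a subsemigroup, and implicit operations preserve subsemigroups.\<close>

declare split_paired_All[simp del] split_paired_Ex[simp del]

subsection \<open>Finite semigroups and implicit operations\<close>

lemma fin_sgr_finite: "fin_sgr S \<Longrightarrow> finite (carr S)"
  unfolding fin_sgr_def by blast

lemma fin_sgr_nonempty: "fin_sgr S \<Longrightarrow> carr S \<noteq> {}"
  unfolding fin_sgr_def by blast

lemma fin_sgr_closed: "fin_sgr S \<Longrightarrow> a \<in> carr S \<Longrightarrow> b \<in> carr S \<Longrightarrow> smult S a b \<in> carr S"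
  unfolding fin_sgr_def by blast

lemma fin_sgr_assoc:
  "fin_sgr S \<Longrightarrow> a \<in> carr S \<Longrightarrow> b \<in> carr S \<Longrightarrow> c \<in> carr S \<Longrightarrow>
    smult S (smult S a b) c = smult S a (smult S b c)"
  unfolding fin_sgr_def by blast

lemma FinSg_iff [simp]: "S \<in> FinSg \<longleftrightarrow> fin_sgr S"
  by (simp add: FinSg_def)

lemma pseudovariety_subset_FinSg: "pseudovariety V \<Longrightarrow> V \<subseteq> FinSg"
  unfolding pseudovariety_def by (auto dest!: conjunct1)

lemma valid_fin_sgr: "V \<subseteq> FinSg \<Longrightarrow> valid V S \<phi> \<Longrightarrow> fin_sgr S"
  unfolding valid_def by auto

lemma valid_FinSg: "V \<subseteq> FinSg \<Longrightarrow> valid V S \<phi> \<Longrightarrow> valid FinSg S \<phi>"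
  unfolding valid_def by auto

lemma valid_comp_hom: "valid V S \<phi> \<Longrightarrow> T \<in> V \<Longrightarrow> sg_hom S T h \<Longrightarrow> valid V T (h \<circ> \<phi>)"
  unfolding valid_def sg_hom_def by (metis image_comp image_mono order_trans)

lemma sg_hom_comp: "sg_hom P Q g \<Longrightarrow> sg_hom Q S h \<Longrightarrow> sg_hom P S (h \<circ> g)"
  unfolding sg_hom_def by (auto simp: image_subset_iff)

lemma implicit_op_carr:
  "implicit_op n f \<Longrightarrow> fin_sgr S \<Longrightarrow> length xs = n \<Longrightarrow> set xs \<subseteq> carr S \<Longrightarrow> f S xs \<in> carr S"
  unfolding implicit_op_def by blast

lemma implicit_op_natural:
  "implicit_op n f \<Longrightarrow> fin_sgr S \<Longrightarrow> fin_sgr T \<Longrightarrow> sg_hom S T h \<Longrightarrow> length xs = n \<Longrightarrow>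
    set xs \<subseteq> carr S \<Longrightarrow> h (f S xs) = f T (map h xs)"
  unfolding implicit_op_def by blast

lemma implicit_signature_op: "implicit_signature \<sigma> \<Longrightarrow> op \<in> \<sigma> \<Longrightarrow> implicit_op (fst op) (snd op)"
  unfolding implicit_signature_def by (cases op) auto

lemma mult_op_in_signature: "implicit_signature \<sigma> \<Longrightarrow> mult_op \<in> \<sigma>"
  unfolding implicit_signature_def by blast

definition trivS :: sgr where "trivS = ({0}, \<lambda>_ _. 0)"

lemma fin_sgr_trivS: "fin_sgr trivS"
  by (simp add: fin_sgr_def trivS_def carr_def smult_def)

text \<open>A nullary implicit operation would pick a natural element of every finite semigroup,
which is impossible: the two homomorphisms from the trivial semigroup to \<open>({0,1}, min)\<close>
would have to agree.\<close>

lemma implicit_op_not_nullary: "\<not> implicit_op 0 f"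
proof
  assume f: "implicit_op 0 f"
  define T :: sgr where "T = ({0, 1}, min)"
  have T: "fin_sgr T"
    by (auto simp: fin_sgr_def T_def carr_def smult_def min_def)
  have "sg_hom trivS T (\<lambda>_. 0)" "sg_hom trivS T (\<lambda>_. 1)"
    by (auto simp: sg_hom_def trivS_def T_def carr_def smult_def)
  from this[THEN implicit_op_natural[OF f fin_sgr_trivS T, of _ "[]"]] show False
    by simp
qed

lemma implicit_op_subsemigroup:
  assumes f: "implicit_op n f" and P: "fin_sgr P" and E: "E \<subseteq> carr P"
    and E_mult: "\<And>a b. a \<in> E \<Longrightarrow> b \<in> E \<Longrightarrow> smult P a b \<in> E"
    and xs: "length xs = n" "set xs \<subseteq> E"
  shows "f P xs \<in> E"
proof -
  have "xs \<noteq> []"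
    using implicit_op_not_nullary f xs(1) by auto
  then have "E \<noteq> {}"
    using xs(2) by auto
  define Q :: sgr where "Q = (E, smult P)"
  have Q: "fin_sgr Q"
    using \<open>E \<noteq> {}\<close> E fin_sgr_finite[OF P] finite_subset E_mult fin_sgr_assoc[OF P]
    unfolding fin_sgr_def Q_def carr_def smult_def by (auto simp: subset_iff)
  have hom: "sg_hom Q P id"
    using E by (simp add: sg_hom_def Q_def carr_def smult_def)
  have "f Q xs \<in> E"
    using implicit_op_carr[OF f Q xs(1)] xs(2) by (simp add: Q_def carr_def)
  moreover have "f Q xs = f P xs"
    using implicit_op_natural[OF f Q P hom xs(1)] xs(2) by (simp add: Q_def carr_def)
  ultimately show ?thesis
    by simp
qed

subsection \<open>Implicit operations on free profinite semigroups\<close>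

lemma free_pro_carr: "w \<in> free_pro V \<Longrightarrow> valid V S \<phi> \<Longrightarrow> w S \<phi> \<in> carr S"
  unfolding free_pro_def by blast

lemma free_pro_undefined: "w \<in> free_pro V \<Longrightarrow> \<not> valid V S \<phi> \<Longrightarrow> w S \<phi> = undefined"
  unfolding free_pro_def by blast

lemma free_pro_natural:
  "w \<in> free_pro V \<Longrightarrow> valid V S \<phi> \<Longrightarrow> T \<in> V \<Longrightarrow> sg_hom S T h \<Longrightarrow> h (w S \<phi>) = w T (h \<circ> \<phi>)"
  unfolding free_pro_def by blast

lemma free_proI:
  assumes "\<And>S \<phi>. valid V S \<phi> \<Longrightarrow> w S \<phi> \<in> carr S"
    and "\<And>S \<phi>. \<not> valid V S \<phi> \<Longrightarrow> w S \<phi> = undefined"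
    and "\<And>S T h \<phi>. valid V S \<phi> \<Longrightarrow> T \<in> V \<Longrightarrow> sg_hom S T h \<Longrightarrow> h (w S \<phi>) = w T (h \<circ> \<phi>)"
  shows "w \<in> free_pro V"
  using assms unfolding free_pro_def by blast

lemma apply_op_free_pro:
  fixes ws :: "'x pelt list"
  assumes V: "V \<subseteq> FinSg" and op: "implicit_op (fst op) (snd op)"
    and ws: "length ws = fst op" "set ws \<subseteq> free_pro V"
  shows "apply_op V op ws \<in> free_pro V"
proof (rule free_proI)
  fix S and \<phi> :: "'x \<Rightarrow> nat" assume S: "valid V S \<phi>"
  then have args: "set (map (\<lambda>w. w S \<phi>) ws) \<subseteq> carr S"
    using ws(2) free_pro_carr[OF _ S] by auto
  show "apply_op V op ws S \<phi> \<in> carr S"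
    using S implicit_op_carr[OF op valid_fin_sgr[OF V S] _ args] ws(1)
    by (simp add: apply_op_def)
  fix T h assume T: "T \<in> V" and h: "sg_hom S T h"
  have "h (snd op S (map (\<lambda>w. w S \<phi>) ws)) = snd op T (map h (map (\<lambda>w. w S \<phi>) ws))"
    by (rule implicit_op_natural[OF op valid_fin_sgr[OF V S] _ h _ args]) (use T V ws(1) in auto)
  also have "map h (map (\<lambda>w. w S \<phi>) ws) = map (\<lambda>w. w T (h \<circ> \<phi>)) ws"
    using ws(2) free_pro_natural[OF _ S T h] by auto
  finally show "h (apply_op V op ws S \<phi>) = apply_op V op ws T (h \<circ> \<phi>)"
    using S valid_comp_hom[OF S T h] by (simp add: apply_op_def)
qed (simp add: apply_op_def)

lemma gen_free_pro: "gen V (x :: 'x) \<in> free_pro V"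
proof (rule free_proI)
  fix S T h and \<phi> :: "'x \<Rightarrow> nat" assume "valid V S \<phi>" "T \<in> V" "sg_hom S T h"
  then show "h (gen V x S \<phi>) = gen V x T (h \<circ> \<phi>)"
    by (simp add: gen_def valid_comp_hom)
qed (auto simp: gen_def valid_def)

lemma pmult_free_pro:
  fixes u v :: "'x pelt"
  assumes V: "V \<subseteq> FinSg" and "u \<in> free_pro V" "v \<in> free_pro V"
  shows "pmult V u v \<in> free_pro V"
proof (rule free_proI)
  fix S and \<phi> :: "'x \<Rightarrow> nat" assume S: "valid V S \<phi>"
  have uv: "u S \<phi> \<in> carr S" "v S \<phi> \<in> carr S"
    using free_pro_carr[OF assms(2) S] free_pro_carr[OF assms(3) S] .
  then show "pmult V u v S \<phi> \<in> carr S"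
    by (simp add: pmult_def S fin_sgr_closed[OF valid_fin_sgr[OF V S]])
  fix T h assume T: "T \<in> V" and h: "sg_hom S T h"
  have "h (smult S (u S \<phi>) (v S \<phi>)) = smult T (h (u S \<phi>)) (h (v S \<phi>))"
    using h uv unfolding sg_hom_def by blast
  then show "h (pmult V u v S \<phi>) = pmult V u v T (h \<circ> \<phi>)"
    by (simp add: pmult_def S valid_comp_hom[OF S T h]
        free_pro_natural[OF assms(2) S T h] free_pro_natural[OF assms(3) S T h])
qed (simp add: pmult_def)

lemma pmult_eq_apply_op:
  fixes u v :: "'x pelt"
  assumes V: "V \<subseteq> FinSg" and "u \<in> free_pro V" "v \<in> free_pro V"
  shows "pmult V u v = apply_op V mult_op [u, v]"
proof (intro ext)
  fix S and \<phi> :: "'x \<Rightarrow> nat"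
  show "pmult V u v S \<phi> = apply_op V mult_op [u, v] S \<phi>"
    using free_pro_carr[OF assms(2)] free_pro_carr[OF assms(3)] valid_fin_sgr[OF V, of S \<phi>]
    by (cases "valid V S \<phi>") (simp_all add: pmult_def apply_op_def mult_op_def)
qed

lemma eval_setmult:
  assumes S: "valid V S \<phi>" and "a \<in> (\<lambda>u. u S \<phi>) ` A" "b \<in> (\<lambda>u. u S \<phi>) ` B"
  shows "smult S a b \<in> (\<lambda>u. u S \<phi>) ` setmult V A B"
proof -
  obtain u v where "u \<in> A" "v \<in> B" "a = u S \<phi>" "b = v S \<phi>"
    using assms(2,3) by blast
  then have "pmult V u v \<in> setmult V A B" "smult S a b = pmult V u v S \<phi>"
    using S by (auto simp: setmult_def pmult_def)
  then show ?thesis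
    by blast
qed

lemma pmult_assoc:
  fixes u v w :: "'x pelt"
  assumes V: "V \<subseteq> FinSg" and "u \<in> free_pro V" "v \<in> free_pro V" "w \<in> free_pro V"
  shows "pmult V (pmult V u v) w = pmult V u (pmult V v w)"
proof (intro ext)
  fix S and \<phi> :: "'x \<Rightarrow> nat"
  show "pmult V (pmult V u v) w S \<phi> = pmult V u (pmult V v w) S \<phi>"
    using free_pro_carr[OF assms(2)] free_pro_carr[OF assms(3)] free_pro_carr[OF assms(4)]
      fin_sgr_assoc[OF valid_fin_sgr[OF V, of S \<phi>]]
    by (cases "valid V S \<phi>") (simp_all add: pmult_def)
qed

lemma subalg_least:
  assumes "U \<subseteq> A"
    and "\<And>op ws. op \<in> \<sigma> \<Longrightarrow> length ws = fst op \<Longrightarrow> set ws \<subseteq> A \<Longrightarrow> apply_op V op ws \<in> A"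
  shows "subalg V \<sigma> U \<subseteq> A"
proof
  fix u assume "u \<in> subalg V \<sigma> U"
  then show "u \<in> A"
  proof induction
    case (app op ws)
    then show ?case
      using assms(2)[of op ws] by blast
  qed (use assms(1) in blast)
qed

lemma subalg_mono: "U \<subseteq> U' \<Longrightarrow> subalg V \<sigma> U \<subseteq> subalg V \<sigma> U'"
  by (rule subalg_least) (auto intro: subalg.intros)

lemma subalg_free_pro:
  "V \<subseteq> FinSg \<Longrightarrow> implicit_signature \<sigma> \<Longrightarrow> U \<subseteq> free_pro V \<Longrightarrow> subalg V \<sigma> U \<subseteq> free_pro V"
  by (rule subalg_least) (auto intro: apply_op_free_pro implicit_signature_op)

lemma Omega_sigma_free_pro:
  "V \<subseteq> FinSg \<Longrightarrow> implicit_signature \<sigma> \<Longrightarrow> Omega_sigma V \<sigma> \<subseteq> free_pro V"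
  unfolding Omega_sigma_def by (rule subalg_free_pro) (auto intro: gen_free_pro)

lemma apply_op_Omega_sigma:
  "op \<in> \<sigma> \<Longrightarrow> length ws = fst op \<Longrightarrow> set ws \<subseteq> Omega_sigma V \<sigma> \<Longrightarrow>
    apply_op V op ws \<in> Omega_sigma V \<sigma>"
  unfolding Omega_sigma_def by (auto intro: subalg.app)

lemma pmult_Omega_sigma:
  assumes V: "V \<subseteq> FinSg" and sig: "implicit_signature \<sigma>"
    and uv: "u \<in> Omega_sigma V \<sigma>" "v \<in> Omega_sigma V \<sigma>"
  shows "pmult V u v \<in> Omega_sigma V \<sigma>"
proof -
  have "u \<in> free_pro V" "v \<in> free_pro V"
    using uv Omega_sigma_free_pro[OF V sig] by auto
  then have "pmult V u v = apply_op V mult_op [u, v]"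
    by (rule pmult_eq_apply_op[OF V])
  also have "\<dots> \<in> Omega_sigma V \<sigma>"
    by (rule apply_op_Omega_sigma[OF mult_op_in_signature[OF sig]]) (use uv in \<open>simp_all add: mult_op_def\<close>)
  finally show ?thesis .
qed

lemma proj_apply_op:
  "V \<subseteq> FinSg \<Longrightarrow> proj V (apply_op FinSg op ws) = apply_op V op (map (proj V) ws)"
  by (auto simp: fun_eq_iff proj_def apply_op_def o_def dest: valid_FinSg)

lemma proj_gen: "V \<subseteq> FinSg \<Longrightarrow> proj V (gen FinSg x) = gen V x"
  by (auto simp: fun_eq_iff proj_def gen_def dest: valid_FinSg)

lemma proj_pmult: "V \<subseteq> FinSg \<Longrightarrow> proj V (pmult FinSg u v) = pmult V (proj V u) (proj V v)"
  by (auto simp: fun_eq_iff proj_def pmult_def dest: valid_FinSg)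

lemma proj_free_pro:
  fixes u :: "'x pelt"
  assumes V: "V \<subseteq> FinSg" and u: "u \<in> free_pro FinSg"
  shows "proj V u \<in> free_pro V"
proof (rule free_proI)
  fix S and \<phi> :: "'x \<Rightarrow> nat" assume S: "valid V S \<phi>"
  then show "proj V u S \<phi> \<in> carr S"
    using free_pro_carr[OF u valid_FinSg[OF V]] by (simp add: proj_def)
  fix T h assume T: "T \<in> V" and h: "sg_hom S T h"
  then have "h (u S \<phi>) = u T (h \<circ> \<phi>)"
    using V by (intro free_pro_natural[OF u valid_FinSg[OF V S]]) auto
  then show "h (proj V u S \<phi>) = proj V u T (h \<circ> \<phi>)"
    by (simp add: proj_def S valid_comp_hom[OF S T h])
qed (simp add: proj_def)

lemma proj_subalg:
  assumes V: "V \<subseteq> FinSg"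
  shows "proj V ` subalg FinSg \<sigma> U = subalg V \<sigma> (proj V ` U)"
proof
  have "subalg FinSg \<sigma> U \<subseteq> proj V -` subalg V \<sigma> (proj V ` U)"
  proof (rule subalg_least)
    fix op ws
    assume "op \<in> \<sigma>" "length ws = fst op" "set ws \<subseteq> proj V -` subalg V \<sigma> (proj V ` U)"
    then show "apply_op FinSg op ws \<in> proj V -` subalg V \<sigma> (proj V ` U)"
      by (auto simp: proj_apply_op[OF V] intro!: subalg.app)
  qed (auto intro: subalg.base)
  then show "proj V ` subalg FinSg \<sigma> U \<subseteq> subalg V \<sigma> (proj V ` U)"
    by blast
  show "subalg V \<sigma> (proj V ` U) \<subseteq> proj V ` subalg FinSg \<sigma> U"
  proof (rule subalg_least)
    fix op ws
    assume op: "op \<in> \<sigma>" "length ws = fst op" and "set ws \<subseteq> proj V ` subalg FinSg \<sigma> U"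
    then have "ws \<in> lists (proj V ` subalg FinSg \<sigma> U)"
      by (simp add: lists_eq_set)
    then have "ws \<in> map (proj V) ` lists (subalg FinSg \<sigma> U)"
      by (simp only: lists_image)
    then obtain ws' where "ws = map (proj V) ws'" "set ws' \<subseteq> subalg FinSg \<sigma> U"
      by auto
    with op show "apply_op V op ws \<in> proj V ` subalg FinSg \<sigma> U"
      by (auto simp: proj_apply_op[OF V, symmetric] intro!: imageI subalg.app)
  qed (auto intro: subalg.base)
qed

lemma proj_Omega_sigma: "V \<subseteq> FinSg \<Longrightarrow> proj V ` Omega_sigma FinSg \<sigma> \<subseteq> Omega_sigma V \<sigma>"
  unfolding Omega_sigma_def proj_subalg image_image proj_gen by simp

lemma proj_setmult:
  assumes V: "V \<subseteq> FinSg"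
  shows "proj V ` setmult FinSg K L = setmult V (proj V ` K) (proj V ` L)"
proof -
  have "setmult V (proj V ` K) (proj V ` L) = {proj V (pmult FinSg a b) | a b. a \<in> K \<and> b \<in> L}"
    unfolding setmult_def proj_pmult[OF V] by blast
  then show ?thesis
    unfolding setmult_def by blast
qed

lemma proj_splus:
  assumes V: "V \<subseteq> FinSg"
  shows "proj V ` splus FinSg A = splus V (proj V ` A)"
proof
  show "proj V ` splus FinSg A \<subseteq> splus V (proj V ` A)"
  proof (rule image_subsetI)
    fix u assume "u \<in> splus FinSg A"
    then show "proj V u \<in> splus V (proj V ` A)"
    proof induction
      case (step u a)
      then show ?case
        unfolding proj_pmult[OF V] by (blast intro: splus.step)
    qed (blast intro: splus.one)
  qed
  show "splus V (proj V ` A) \<subseteq> proj V ` splus FinSg A"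
  proof
    fix u assume "u \<in> splus V (proj V ` A)"
    then show "u \<in> proj V ` splus FinSg A"
    proof induction
      case (step u a)
      then obtain u' a' where "u' \<in> splus FinSg A" "a' \<in> A" "u = proj V u'" "a = proj V a'"
        by blast
      then have "pmult V u a = proj V (pmult FinSg u' a')" "pmult FinSg u' a' \<in> splus FinSg A"
        by (simp_all add: proj_pmult[OF V] splus.step)
      then show ?case
        by blast
    qed (blast intro: splus.one)
  qed
qed

lemma splus_Omega_sigma:
  assumes sig: "implicit_signature \<sigma>" and A: "A \<subseteq> Omega_sigma FinSg \<sigma>"
  shows "splus FinSg A \<subseteq> Omega_sigma FinSg \<sigma>"
proof
  fix u assume "u \<in> splus FinSg A"
  then show "u \<in> Omega_sigma FinSg \<sigma>"
  proof induction
    case (step u a)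
    then show ?case
      using A pmult_Omega_sigma[OF order_refl sig, of u a] by blast
  qed (use A in blast)
qed

lemma splus_free_pro:
  assumes V: "V \<subseteq> FinSg" and A: "A \<subseteq> free_pro V"
  shows "splus V A \<subseteq> free_pro V"
proof
  fix u assume "u \<in> splus V A"
  then show "u \<in> free_pro V"
  proof induction
    case (step u a)
    then show ?case
      using A pmult_free_pro[OF V, of u a] by blast
  qed (use A in blast)
qed

lemma pmult_splus:
  assumes V: "V \<subseteq> FinSg" and A: "A \<subseteq> free_pro V"
    and u: "u \<in> splus V A" and v: "v \<in> splus V A"
  shows "pmult V u v \<in> splus V A"
  using v
proof induction
  case (one a)
  then show ?case
    using u by (rule splus.step[rotated])
next
  case (step v a)
  have "u \<in> free_pro V" "v \<in> free_pro V" "a \<in> free_pro V"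
    using splus_free_pro[OF V A] u step.hyps A by blast+
  then have "pmult V u (pmult V v a) = pmult V (pmult V u v) a"
    by (simp add: pmult_assoc[OF V])
  then show ?case
    using step by (simp add: splus.step)
qed

subsection \<open>Closures\<close>

lemma pcl_free_pro: "pcl V A \<subseteq> free_pro V"
  unfolding pcl_def by blast

lemma pclI:
  "u \<in> free_pro V \<Longrightarrow>
    (\<And>F. finite F \<Longrightarrow> \<forall>(S, \<phi>)\<in>F. valid V S \<phi> \<Longrightarrow> \<exists>a\<in>A. \<forall>(S, \<phi>)\<in>F. a S \<phi> = u S \<phi>) \<Longrightarrow>
    u \<in> pcl V A"
  unfolding pcl_def by blast

lemma pclD:
  "u \<in> pcl V A \<Longrightarrow> finite F \<Longrightarrow> \<forall>(S, \<phi>)\<in>F. valid V S \<phi> \<Longrightarrow>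
    \<exists>a\<in>A. \<forall>(S, \<phi>)\<in>F. a S \<phi> = u S \<phi>"
  unfolding pcl_def by blast

lemma pcl_eval: "u \<in> pcl V A \<Longrightarrow> valid V S \<phi> \<Longrightarrow> u S \<phi> \<in> (\<lambda>a. a S \<phi>) ` A"
  using pclD[of u V A "{(S, \<phi>)}"] by (auto simp: image_iff) metis

lemma pcl_mono: "A \<subseteq> B \<Longrightarrow> pcl V A \<subseteq> pcl V B"
  unfolding pcl_def by blast

lemma pcl_superset: "A \<subseteq> free_pro V \<Longrightarrow> A \<subseteq> pcl V A"
  by (auto intro!: pclI)

lemma free_pro_agree_factor:
  assumes "u \<in> free_pro V" "w \<in> free_pro V" "valid V P \<psi>" "S \<in> V" "sg_hom P S h"
    and "u P \<psi> = w P \<psi>"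
  shows "u S (h \<circ> \<psi>) = w S (h \<circ> \<psi>)"
  using assms free_pro_natural by metis

lemma free_pro_valid_if_differ:
  "u \<in> free_pro V \<Longrightarrow> w \<in> free_pro V \<Longrightarrow> u S \<phi> \<noteq> w S \<phi> \<Longrightarrow> valid V S \<phi>"
  using free_pro_undefined by metis

lemma pcl_finite:
  fixes A :: "'x pelt set"
  assumes fin: "finite A" and A: "A \<subseteq> free_pro V"
  shows "pcl V A \<subseteq> A"
proof
  fix u assume u: "u \<in> pcl V A"
  show "u \<in> A"
  proof (rule ccontr)
    assume "u \<notin> A"
    have "\<exists>p. a (fst p) (snd p) \<noteq> u (fst p) (snd p)" if "a \<in> A" for a
    proof -
      from that \<open>u \<notin> A\<close> obtain S \<phi> where "a S \<phi> \<noteq> u S \<phi>"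
        by (metis ext)
      then show ?thesis
        by (intro exI[of _ "(S, \<phi>)"]) simp
    qed
    then obtain sep where sep: "\<And>a. a \<in> A \<Longrightarrow> a (fst (sep a)) (snd (sep a)) \<noteq> u (fst (sep a)) (snd (sep a))"
      by metis
    have "\<forall>(S, \<phi>)\<in>sep ` A. valid V S \<phi>"
      using sep free_pro_valid_if_differ A pcl_free_pro u
      unfolding case_prod_unfold by blast
    then obtain a where "a \<in> A" "\<forall>(S, \<phi>)\<in>sep ` A. a S \<phi> = u S \<phi>"
      using pclD[OF u] fin by blast
    then show False
      using sep unfolding case_prod_unfold by blast
  qed
qed

lemma pcl_Un: "pcl V (A \<union> B) \<subseteq> pcl V A \<union> pcl V B"
proof
  fix u assume u: "u \<in> pcl V (A \<union> B)"
  show "u \<in> pcl V A \<union> pcl V B"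
  proof (rule ccontr)
    assume "u \<notin> pcl V A \<union> pcl V B"
    moreover have "u \<in> free_pro V"
      using u pcl_free_pro by blast
    ultimately obtain F1 F2 where F: "finite F1" "\<forall>(S, \<phi>)\<in>F1. valid V S \<phi>"
      "\<not> (\<exists>a\<in>A. \<forall>(S, \<phi>)\<in>F1. a S \<phi> = u S \<phi>)"
      "finite F2" "\<forall>(S, \<phi>)\<in>F2. valid V S \<phi>"
      "\<not> (\<exists>a\<in>B. \<forall>(S, \<phi>)\<in>F2. a S \<phi> = u S \<phi>)"
      unfolding pcl_def by blast
    then have "finite (F1 \<union> F2)" "\<forall>(S, \<phi>)\<in>F1 \<union> F2. valid V S \<phi>"
      by auto
    from pclD[OF u this] obtain a where "a \<in> A \<union> B" "\<forall>(S, \<phi>)\<in>F1 \<union> F2. a S \<phi> = u S \<phi>"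
      by blast
    with F(3,6) show False
      by blast
  qed
qed

lemma pmult_pcl:
  fixes u v :: "'x pelt"
  assumes V: "V \<subseteq> FinSg" and u: "u \<in> pcl V K" and v: "v \<in> pcl V L"
  shows "pmult V u v \<in> pcl V (setmult V K L)"
proof (rule pclI)
  show "pmult V u v \<in> free_pro V"
    using u v pcl_free_pro pmult_free_pro[OF V] by blast
next
  fix F :: "(sgr \<times> ('x \<Rightarrow> nat)) set" assume F: "finite F" "\<forall>(S, \<phi>)\<in>F. valid V S \<phi>"
  obtain a b where "a \<in> K" "b \<in> L" "\<forall>(S, \<phi>)\<in>F. a S \<phi> = u S \<phi> \<and> b S \<phi> = v S \<phi>"
    using pclD[OF u F] pclD[OF v F] unfolding case_prod_unfold by blast
  moreover from this have "pmult V a b \<in> setmult V K L"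
    by (auto simp: setmult_def)
  ultimately show "\<exists>c\<in>setmult V K L. \<forall>(S, \<phi>)\<in>F. c S \<phi> = pmult V u v S \<phi>"
    unfolding case_prod_unfold by (intro bexI[of _ "pmult V a b"]) (simp_all add: pmult_def)
qed

lemma proj_pcl:
  fixes u :: "'x pelt"
  assumes V: "V \<subseteq> FinSg" and u: "u \<in> pcl FinSg L"
  shows "proj V u \<in> pcl V (proj V ` L)"
proof (rule pclI)
  show "proj V u \<in> free_pro V"
    using proj_free_pro[OF V] u pcl_free_pro by blast
next
  fix F :: "(sgr \<times> ('x \<Rightarrow> nat)) set" assume F: "finite F" "\<forall>(S, \<phi>)\<in>F. valid V S \<phi>"
  then have "\<forall>(S, \<phi>)\<in>F. valid FinSg S \<phi>"
    using valid_FinSg[OF V] unfolding case_prod_unfold by blast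
  then obtain a where "a \<in> L" "\<forall>(S, \<phi>)\<in>F. a S \<phi> = u S \<phi>"
    using pclD[OF u F(1)] by blast
  then show "\<exists>c\<in>proj V ` L. \<forall>(S, \<phi>)\<in>F. c S \<phi> = proj V u S \<phi>"
    unfolding case_prod_unfold by (auto simp: proj_def)
qed

lemma cl_sigma_mono: "A \<subseteq> B \<Longrightarrow> cl_sigma V \<sigma> A \<subseteq> cl_sigma V \<sigma> B"
  unfolding cl_sigma_def using pcl_mono[of A B V] by blast

lemma cl_sigma_superset:
  assumes V: "V \<subseteq> FinSg" and sig: "implicit_signature \<sigma>" and A: "A \<subseteq> Omega_sigma V \<sigma>"
  shows "A \<subseteq> cl_sigma V \<sigma> A"
proof -
  have "A \<subseteq> free_pro V"
    using A Omega_sigma_free_pro[OF V sig] by (rule order_trans)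
  then show ?thesis
    unfolding cl_sigma_def using pcl_superset[of A V] A by blast
qed

lemma cl_sigma_finite: "finite A \<Longrightarrow> A \<subseteq> free_pro V \<Longrightarrow> cl_sigma V \<sigma> A \<subseteq> A"
  unfolding cl_sigma_def using pcl_finite[of A V] by blast

lemma cl_sigma_Un: "cl_sigma V \<sigma> (A \<union> B) \<subseteq> cl_sigma V \<sigma> A \<union> cl_sigma V \<sigma> B"
  unfolding cl_sigma_def using pcl_Un[of V A B] by blast

lemma setmult_cl_sigma:
  assumes V: "V \<subseteq> FinSg" and sig: "implicit_signature \<sigma>"
  shows "setmult V (cl_sigma V \<sigma> K) (cl_sigma V \<sigma> L) \<subseteq> cl_sigma V \<sigma> (setmult V K L)"
proof
  fix w assume "w \<in> setmult V (cl_sigma V \<sigma> K) (cl_sigma V \<sigma> L)"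
  then obtain u v where "w = pmult V u v" "u \<in> pcl V K" "v \<in> pcl V L"
    "u \<in> Omega_sigma V \<sigma>" "v \<in> Omega_sigma V \<sigma>"
    unfolding setmult_def cl_sigma_def by blast
  then show "w \<in> cl_sigma V \<sigma> (setmult V K L)"
    unfolding cl_sigma_def by (simp add: pmult_pcl[OF V] pmult_Omega_sigma[OF V sig])
qed

lemma proj_cl_sigma:
  assumes V: "V \<subseteq> FinSg"
  shows "proj V ` cl_sigma FinSg \<sigma> L \<subseteq> cl_sigma V \<sigma> (proj V ` L)"
proof (rule image_subsetI)
  fix u assume "u \<in> cl_sigma FinSg \<sigma> L"
  then show "proj V u \<in> cl_sigma V \<sigma> (proj V ` L)"
    unfolding cl_sigma_def using proj_pcl[OF V, of u L] proj_Omega_sigma[OF V, of \<sigma>] by blast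
qed

subsection \<open>Closures of iterations\<close>

definition prodS :: "sgr \<Rightarrow> sgr \<Rightarrow> sgr" where
  "prodS P S = (prod_encode ` (carr P \<times> carr S),
     \<lambda>x y. prod_encode (smult P (fst (prod_decode x)) (fst (prod_decode y)),
                        smult S (snd (prod_decode x)) (snd (prod_decode y))))"

lemma carr_prodS: "carr (prodS P S) = prod_encode ` (carr P \<times> carr S)"
  by (simp add: prodS_def carr_def)

lemma smult_prodS:
  "smult (prodS P S) x y = prod_encode (smult P (fst (prod_decode x)) (fst (prod_decode y)),
     smult S (snd (prod_decode x)) (snd (prod_decode y)))"
  by (simp add: prodS_def smult_def)

lemma fin_sgr_prodS:
  assumes P: "fin_sgr P" and S: "fin_sgr S"
  shows "fin_sgr (prodS P S)"
  unfolding fin_sgr_def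
proof (intro conjI ballI)
  show "finite (carr (prodS P S))" "carr (prodS P S) \<noteq> {}"
    unfolding carr_prodS using P S by (simp_all add: fin_sgr_finite fin_sgr_nonempty)
next
  fix a b assume "a \<in> carr (prodS P S)" "b \<in> carr (prodS P S)"
  then show "smult (prodS P S) a b \<in> carr (prodS P S)"
    using fin_sgr_closed[OF P] fin_sgr_closed[OF S] by (auto simp: smult_prodS carr_prodS)
next
  fix a b c assume "a \<in> carr (prodS P S)" "b \<in> carr (prodS P S)" "c \<in> carr (prodS P S)"
  then show "smult (prodS P S) (smult (prodS P S) a b) c = smult (prodS P S) a (smult (prodS P S) b c)"
    using fin_sgr_closed[OF P] fin_sgr_closed[OF S] fin_sgr_assoc[OF P] fin_sgr_assoc[OF S]
    by (auto simp: smult_prodS carr_prodS)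
qed

lemma sg_hom_prodS_fst: "sg_hom (prodS P S) P (\<lambda>x. fst (prod_decode x))"
  unfolding sg_hom_def carr_prodS by (auto simp: smult_prodS)

lemma sg_hom_prodS_snd: "sg_hom (prodS P S) S (\<lambda>x. snd (prod_decode x))"
  unfolding sg_hom_def carr_prodS by (auto simp: smult_prodS)

lemma finite_valid_factor:
  fixes F :: "(sgr \<times> ('x \<Rightarrow> nat)) set"
  assumes "finite F" "\<forall>(S, \<phi>)\<in>F. valid FinSg S \<phi>"
  shows "\<exists>P \<psi>. valid FinSg P \<psi> \<and> (\<forall>(S, \<phi>)\<in>F. \<exists>h. sg_hom P S h \<and> h \<circ> \<psi> = \<phi>)"
  using assms
proof (induction F rule: finite_induct)
  case empty
  have "valid FinSg trivS (\<lambda>_. 0)"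
    using fin_sgr_trivS by (auto simp: valid_def trivS_def carr_def)
  then show ?case
    by blast
next
  case (insert p F)
  obtain S \<phi> where p: "p = (S, \<phi>)"
    by (cases p)
  have "\<forall>(S, \<phi>)\<in>F. valid FinSg S \<phi>"
    using insert.prems by simp
  then obtain P \<psi> where P: "valid FinSg P \<psi>" and factor: "\<forall>(T, \<chi>)\<in>F. \<exists>h. sg_hom P T h \<and> h \<circ> \<psi> = \<chi>"
    using insert.IH by blast
  have S: "valid FinSg S \<phi>"
    using insert.prems p by auto
  define \<psi>' where "\<psi>' = (\<lambda>x. prod_encode (\<psi> x, \<phi> x))"
  have "\<exists>h. sg_hom (prodS P S) S h \<and> h \<circ> \<psi>' = \<phi>"
    by (intro exI[of _ "\<lambda>x. snd (prod_decode x)"]) (simp add: sg_hom_prodS_snd \<psi>'_def o_def)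
  moreover have "\<exists>h. sg_hom (prodS P S) T h \<and> h \<circ> \<psi>' = \<chi>" if T: "(T, \<chi>) \<in> F" for T \<chi>
  proof -
    obtain h where h: "sg_hom P T h" "h \<circ> \<psi> = \<chi>"
      using factor T by auto
    show ?thesis
      using sg_hom_comp[OF sg_hom_prodS_fst h(1)] h(2)
      by (intro exI[of _ "h \<circ> (\<lambda>x. fst (prod_decode x))"]) (auto simp: \<psi>'_def o_def)
  qed
  ultimately have "\<forall>(T, \<chi>)\<in>insert (S, \<phi>) F. \<exists>h. sg_hom (prodS P S) T h \<and> h \<circ> \<psi>' = \<chi>"
    by (auto simp: case_prod_unfold)
  moreover have "valid FinSg (prodS P S) \<psi>'"
    using P S fin_sgr_prodS unfolding valid_def \<psi>'_def carr_prodS by (auto simp: image_subset_iff)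
  ultimately show ?case
    unfolding p by blast
qed

lemma apply_op_pcl_subsemigroup:
  fixes T :: "'x pelt set"
  assumes op: "implicit_op (fst op) (snd op)" and T: "T \<subseteq> free_pro FinSg"
    and T_mult: "\<And>u v. u \<in> T \<Longrightarrow> v \<in> T \<Longrightarrow> pmult FinSg u v \<in> T"
    and ws: "length ws = fst op" "set ws \<subseteq> pcl FinSg T"
  shows "apply_op FinSg op ws \<in> pcl FinSg T"
proof -
  have "set ws \<subseteq> free_pro FinSg"
    using ws(2) pcl_free_pro by blast
  then have apply_op_free: "apply_op FinSg op ws \<in> free_pro FinSg"
    by (rule apply_op_free_pro[OF order_refl op ws(1)])
  show ?thesis
  proof (rule pclI[OF apply_op_free])
    fix F :: "(sgr \<times> ('x \<Rightarrow> nat)) set" assume F: "finite F" "\<forall>(S, \<phi>)\<in>F. valid FinSg S \<phi>"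
    obtain P \<psi> where P\<psi>: "valid FinSg P \<psi>"
      and factor: "\<forall>(S, \<phi>)\<in>F. \<exists>h. sg_hom P S h \<and> h \<circ> \<psi> = \<phi>"
      using finite_valid_factor[OF F] by blast
    have P: "fin_sgr P"
      using P\<psi> by (simp add: valid_def)
    define E where "E = (\<lambda>a. a P \<psi>) ` T"
    define xs where "xs = map (\<lambda>w. w P \<psi>) ws"
    have "setmult FinSg T T \<subseteq> T"
      using T_mult unfolding setmult_def by blast
    then have "smult P a b \<in> E" if "a \<in> E" "b \<in> E" for a b
      using eval_setmult[OF P\<psi> that[unfolded E_def]] unfolding E_def by blast
    moreover have "E \<subseteq> carr P"
      using T free_pro_carr[OF _ P\<psi>] unfolding E_def by blast
    moreover have "set xs \<subseteq> E"
      using ws(2) pcl_eval[OF _ P\<psi>] unfolding E_def xs_def by auto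
    ultimately have "snd op P xs \<in> E"
      using implicit_op_subsemigroup[OF op P] ws(1) by (simp add: xs_def)
    then obtain a where a: "a \<in> T" "a P \<psi> = apply_op FinSg op ws P \<psi>"
      using P\<psi> unfolding E_def xs_def apply_op_def by auto
    have "a S \<phi> = apply_op FinSg op ws S \<phi>" if "(S, \<phi>) \<in> F" for S \<phi>
    proof -
      obtain h where "sg_hom P S h" "\<phi> = h \<circ> \<psi>"
        using factor \<open>(S, \<phi>) \<in> F\<close> by auto
      moreover have "S \<in> FinSg"
        using F(2) \<open>(S, \<phi>) \<in> F\<close> by (auto simp: valid_def)
      ultimately show ?thesis
        using free_pro_agree_factor[OF _ apply_op_free P\<psi>] a T by blast
    qed
    then show "\<exists>a\<in>T. \<forall>(S, \<phi>)\<in>F. a S \<phi> = apply_op FinSg op ws S \<phi>"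
      using a(1) by (intro bexI[of _ a]) (auto simp: case_prod_unfold)
  qed
qed

lemma subalg_cl_sigma_splus:
  fixes L :: "'x pelt set"
  assumes sig: "implicit_signature \<sigma>" and L: "L \<subseteq> Omega_sigma FinSg \<sigma>"
  shows "subalg FinSg \<sigma> (cl_sigma FinSg \<sigma> L) \<subseteq> cl_sigma FinSg \<sigma> (splus FinSg L)"
proof (rule subalg_least)
  show "cl_sigma FinSg \<sigma> L \<subseteq> cl_sigma FinSg \<sigma> (splus FinSg L)"
    by (rule cl_sigma_mono) (auto intro: splus.one)
next
  have L_free: "L \<subseteq> free_pro FinSg"
    using L Omega_sigma_free_pro[OF order_refl sig] by blast
  fix op ws
  assume "op \<in> \<sigma>" "length ws = fst op" "set ws \<subseteq> cl_sigma FinSg \<sigma> (splus FinSg L)"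
  then show "apply_op FinSg op ws \<in> cl_sigma FinSg \<sigma> (splus FinSg L)"
    unfolding cl_sigma_def
    using apply_op_pcl_subsemigroup[OF implicit_signature_op[OF sig] splus_free_pro[OF order_refl L_free]
        pmult_splus[OF order_refl L_free]]
      apply_op_Omega_sigma
    by blast
qed

lemma rat_closure_Omega_sigma:
  assumes sig: "implicit_signature \<sigma>" and B: "\<forall>K\<in>B. K \<subseteq> Omega_sigma FinSg \<sigma>"
    and L: "L \<in> rat_closure B"
  shows "L \<subseteq> Omega_sigma FinSg \<sigma>"
  using L
proof induction
  case (prod K L)
  then show ?case
    unfolding setmult_def using pmult_Omega_sigma[OF order_refl sig] by blast
qed (use B splus_Omega_sigma[OF sig] in blast)+

lemma setmult_mono: "A \<subseteq> A' \<Longrightarrow> B \<subseteq> B' \<Longrightarrow> setmult V A B \<subseteq> setmult V A' B'"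
  unfolding setmult_def by blast

lemma cl_sigma_proj_rat_closure:
  fixes B :: "'x pelt set set"
  assumes sig: "implicit_signature \<sigma>" and V: "V \<subseteq> FinSg"
    and base: "\<forall>K\<in>B. finite K \<and> K \<subseteq> Omega_sigma FinSg \<sigma>"
    and PR_mult: "\<And>K L. K \<in> rat_closure B \<Longrightarrow> L \<in> rat_closure B \<Longrightarrow>
      cl_sigma V \<sigma> (setmult V (proj V ` K) (proj V ` L))
        \<subseteq> setmult V (cl_sigma V \<sigma> (proj V ` K)) (cl_sigma V \<sigma> (proj V ` L))"
    and PR_plus: "\<And>L. L \<in> rat_closure B \<Longrightarrow>
      cl_sigma V \<sigma> (splus V (proj V ` L)) \<subseteq> subalg V \<sigma> (cl_sigma V \<sigma> (proj V ` L))"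
    and L: "L \<in> rat_closure B"
  shows "cl_sigma V \<sigma> (proj V ` L) \<subseteq> proj V ` cl_sigma FinSg \<sigma> L"
  using L
proof induction
  case (base K)
  have "finite K" and K: "K \<subseteq> Omega_sigma FinSg \<sigma>"
    using base.hyps assms(3) by auto
  have "proj V ` K \<subseteq> free_pro V"
    using K proj_Omega_sigma[OF V] Omega_sigma_free_pro[OF V sig] by blast
  with \<open>finite K\<close> have "cl_sigma V \<sigma> (proj V ` K) \<subseteq> proj V ` K"
    by (intro cl_sigma_finite) auto
  also have "\<dots> \<subseteq> proj V ` cl_sigma FinSg \<sigma> K"
    using cl_sigma_superset[OF order_refl sig K] by blast
  finally show ?case .
next
  case (union K L)
  have "cl_sigma V \<sigma> (proj V ` (K \<union> L)) \<subseteq> cl_sigma V \<sigma> (proj V ` K) \<union> cl_sigma V \<sigma> (proj V ` L)"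
    unfolding image_Un by (rule cl_sigma_Un)
  also have "\<dots> \<subseteq> proj V ` (cl_sigma FinSg \<sigma> K \<union> cl_sigma FinSg \<sigma> L)"
    using union.IH by blast
  also have "\<dots> \<subseteq> proj V ` cl_sigma FinSg \<sigma> (K \<union> L)"
    by (intro image_mono Un_least cl_sigma_mono) auto
  finally show ?case .
next
  case (prod K L)
  have "cl_sigma V \<sigma> (proj V ` setmult FinSg K L)
      \<subseteq> setmult V (cl_sigma V \<sigma> (proj V ` K)) (cl_sigma V \<sigma> (proj V ` L))"
    using PR_mult[OF prod.hyps] by (simp add: proj_setmult[OF V])
  also have "\<dots> \<subseteq> setmult V (proj V ` cl_sigma FinSg \<sigma> K) (proj V ` cl_sigma FinSg \<sigma> L)"
    using prod.IH by (rule setmult_mono)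
  also have "\<dots> = proj V ` setmult FinSg (cl_sigma FinSg \<sigma> K) (cl_sigma FinSg \<sigma> L)"
    by (simp add: proj_setmult[OF V])
  also have "\<dots> \<subseteq> proj V ` cl_sigma FinSg \<sigma> (setmult FinSg K L)"
    using setmult_cl_sigma[OF order_refl sig] by (rule image_mono)
  finally show ?case .
next
  case (plus L)
  have "cl_sigma V \<sigma> (proj V ` splus FinSg L) \<subseteq> subalg V \<sigma> (cl_sigma V \<sigma> (proj V ` L))"
    using PR_plus[OF plus.hyps] by (simp add: proj_splus[OF V])
  also have "\<dots> \<subseteq> subalg V \<sigma> (proj V ` cl_sigma FinSg \<sigma> L)"
    using plus.IH by (rule subalg_mono)
  also have "\<dots> = proj V ` subalg FinSg \<sigma> (cl_sigma FinSg \<sigma> L)"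
    by (simp add: proj_subalg[OF V])
  also have "\<dots> \<subseteq> proj V ` cl_sigma FinSg \<sigma> (splus FinSg L)"
    using subalg_cl_sigma_splus[OF sig rat_closure_Omega_sigma[OF sig _ plus.hyps]] base
    by (intro image_mono) blast
  finally show ?case .
qed

theorem proposition4p1:
  fixes \<sigma> :: "(nat \<times> (sgr \<Rightarrow> nat list \<Rightarrow> nat)) set"
    and V :: "sgr set"
    and B :: "('x::finite) pelt set set"
  assumes sig: "implicit_signature \<sigma>"
    and pv: "pseudovariety V"
    and base: "\<forall>K\<in>B. finite K \<and> K \<subseteq> Omega_sigma FinSg \<sigma>"
    and PR: "\<forall>K\<in>rat_closure B. \<forall>L\<in>rat_closure B.
        cl_sigma V \<sigma> (setmult V (proj V ` K) (proj V ` L)) =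
          setmult V (cl_sigma V \<sigma> (proj V ` K)) (cl_sigma V \<sigma> (proj V ` L))
      \<and> cl_sigma V \<sigma> (splus V (proj V ` L)) = subalg V \<sigma> (cl_sigma V \<sigma> (proj V ` L))"
  shows "\<forall>L\<in>rat_closure B. proj V ` cl_sigma FinSg \<sigma> L = cl_sigma V \<sigma> (proj V ` L)"
proof
  fix L assume L: "L \<in> rat_closure B"
  show "proj V ` cl_sigma FinSg \<sigma> L = cl_sigma V \<sigma> (proj V ` L)"
  proof
    show "proj V ` cl_sigma FinSg \<sigma> L \<subseteq> cl_sigma V \<sigma> (proj V ` L)"
      using pv by (intro proj_cl_sigma pseudovariety_subset_FinSg)
    show "cl_sigma V \<sigma> (proj V ` L) \<subseteq> proj V ` cl_sigma FinSg \<sigma> L"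
      by (rule cl_sigma_proj_rat_closure[OF sig pseudovariety_subset_FinSg[OF pv] base _ _ L]) (use PR in auto)
  qed
qed

end
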